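(* Let ${\tt E}$ be ${\tt CS}$ or ${\tt o}$. For all $\lambda j$-terms $t_0,t_1,u_0,u_1$: if $t_0\equiv_{\tt E}t_1$, $t_0\to^*_{\lambda j/{\tt E}}u_0$ and $t_1\to^*_{\lambda j/{\tt E}}u_1$, then there exist $v_0,v_1$ with $u_0\to^*_{\lambda j/{\tt E}}v_0$, $u_1\to^*_{\lambda j/{\tt E}}v_1$ and $v_0\equiv_{\tt E}v_1$.
   Context: $\lambda j$-terms are generated by $t,u::= x\mid \lambda x.t\mid t\,u\mid t[x/u]$; $\lambda x.t$ and $t[x/u]$ bind $x$ in $t$ (not in $u$), and terms are considered modulo $\alpha$-conversion. $\mathrm{fv}(t)$ is the set of free variables, $t\{x/u\}$ is capture-avoiding meta-level substitution, and $|t|_x$ is the number of free occurrences of $x$ in $t$. If $|t|_x=n\ge2$, $t_{[y]_x}$ denotes any term obtained from $t$ by replacing $k$ of the free occurrences of $x$ by a fresh variable $y$, for some $1\le k\le n-1$. ${\tt L}$ denotes a (possibly empty) list of jumps $[x_1/u_1]\dots[x_k/u_k]$. The rewriting rules, closed under all contexts, are: $({\tt dB})$ $(\lambda x.t){\tt L}\,u\to t[x/u]{\tt L}$ where no $x_i$ of ${\tt L}$ is free in $u$; $({\tt w})$ $t[x/u]\to t$ if $|t|_x=0$; $({\tt d})$ $t[x/u]\to t\{x/u\}$ if $|t|_x=1$; $({\tt c})$ $t[x/u]\to t_{[y]_x}[x/u][y/u]$ if $|t|_x\ge2$, $y$ fresh. $\to_{\lambda j}$ is the union of all four. $\equiv_{\tt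 CS}$ is the smallest equivalence closed under contexts containing $t[x/s][y/v]\sim t[y/v][x/s]$ whenever $x\notin\mathrm{fv}(v)$ and $y\notin\mathrm{fv}(s)$. $\equiv_{\tt o}$ is the smallest equivalence closed under contexts containing that equation together with $\lambda y.(t[x/s])\sim(\lambda y.t)[x/s]$ if $y\notin\mathrm{fv}(s)$, and $t[x/s]\,v\sim(t\,v)[x/s]$ if $x\notin\mathrm{fv}(v)$. For an equivalence ${\tt E}$, $t\to_{\lambda j/{\tt E}}u$ iff $t\equiv_{\tt E}t'\to_{\lambda j}u'\equiv_{\tt E}u$ for some $t',u'$. *)

theory Defs
  imports Main
begin

text \<open>lambda-j terms modulo alpha-conversion, represented with de Bruijn indices.
  Lam t binds index 0 in t; Sub t u is the jump t[x/u], binding index 0 in t (not in u).\<close>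

datatype trm = Var nat | Lam trm | App trm trm | Sub trm trm

fun lift :: "nat \<Rightarrow> nat \<Rightarrow> trm \<Rightarrow> trm" where
  "lift k n (Var i) = (if i < k then Var i else Var (i + n))"
| "lift k n (Lam t) = Lam (lift (Suc k) n t)"
| "lift k n (App t u) = App (lift k n t) (lift k n u)"
| "lift k n (Sub t u) = Sub (lift (Suc k) n t) (lift k n u)"

text \<open>Capture-avoiding meta-level substitution: subst k s t replaces the free index k of t
  by s and removes that variable (indices > k decrease by one). s is expressed in the
  context of the result.\<close>
fun subst :: "nat \<Rightarrow> trm \<Rightarrow> trm \<Rightarrow> trm" where
  "subst k s (Var i) = (if i < k then Var i else if i = k then s else Var (i - 1))"
| "subst k s (Lam t) = Lam (subst (Suc k) (lift 0 1 s) t)"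
| "subst k s (App t u) = App (subst k s t) (subst k s u)"
| "subst k s (Sub t u) = Sub (subst (Suc k) (lift 0 1 s) t) (subst k s u)"

fun occ :: "nat \<Rightarrow> trm \<Rightarrow> nat" where
  "occ k (Var i) = (if i = k then 1 else 0)"
| "occ k (Lam t) = occ (Suc k) t"
| "occ k (App t u) = occ k t + occ k u"
| "occ k (Sub t u) = occ (Suc k) t + occ k u"

fun swap :: "nat \<Rightarrow> trm \<Rightarrow> trm" where
  "swap k (Var i) = (if i = k then Var (Suc k) else if i = Suc k then Var k else Var i)"
| "swap k (Lam t) = Lam (swap (Suc k) t)"
| "swap k (App t u) = App (swap k t) (swap k u)"
| "swap k (Sub t u) = Sub (swap (Suc k) t) (swap k u)"

fun jumps :: "trm \<Rightarrow> trm list \<Rightarrow> trm" where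
  "jumps t [] = t"
| "jumps t (u # us) = jumps (Sub t u) us"

inductive ctxt :: "(trm \<Rightarrow> trm \<Rightarrow> bool) \<Rightarrow> trm \<Rightarrow> trm \<Rightarrow> bool" for R where
  base: "R t u \<Longrightarrow> ctxt R t u"
| lam: "ctxt R t u \<Longrightarrow> ctxt R (Lam t) (Lam u)"
| appl: "ctxt R t u \<Longrightarrow> ctxt R (App t v) (App u v)"
| appr: "ctxt R t u \<Longrightarrow> ctxt R (App v t) (App v u)"
| subl: "ctxt R t u \<Longrightarrow> ctxt R (Sub t v) (Sub u v)"
| subr: "ctxt R t u \<Longrightarrow> ctxt R (Sub v t) (Sub v u)"

text \<open>Root rewriting rules of lambda-j.
  dB: (\<lambda>x.t) L u \<rightarrow> t[x/u] L  (u is lifted past the binders of L: alpha-renaming).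
  w:  t[x/u] \<rightarrow> t  when |t|_x = 0  (t does not contain index 0, i.e. is a lifted term).
  d:  t[x/u] \<rightarrow> t{x/u}  when |t|_x = 1.
  c:  t[x/u] \<rightarrow> t_[y]_x [x/u][y/u]  when |t|_x \<ge> 2: t' is the body where index 0 is x and
      index 1 is the fresh y; identifying y with x gives back t, and both x and y occur.\<close>
inductive lj_root :: "trm \<Rightarrow> trm \<Rightarrow> bool" where
  dB: "lj_root (App (jumps (Lam t) us) u) (jumps (Sub t (lift 0 (length us) u)) us)"
| w: "lj_root (Sub (lift 0 1 t) u) t"
| d: "occ 0 t = 1 \<Longrightarrow> lj_root (Sub t u) (subst 0 u t)"
| c: "occ 0 t \<ge> 2 \<Longrightarrow> subst 1 (Var 0) t' = t \<Longrightarrow> occ 0 t' \<ge> 1 \<Longrightarrow> occ 1 t' \<ge> 1 \<Longrightarrow>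
      lj_root (Sub t u) (Sub (Sub t' (lift 0 1 u)) u)"

definition lj :: "trm \<Rightarrow> trm \<Rightarrow> bool" where
  "lj = ctxt lj_root"

text \<open>CS: t[x/s][y/v] ~ t[y/v][x/s] (x \<noteq> y, x \<notin> fv v, y \<notin> fv s).
  o additionally: \<lambda>y.(t[x/s]) ~ (\<lambda>y.t)[x/s] (y \<notin> fv s), and t[x/s] v ~ (t v)[x/s] (x \<notin> fv v).\<close>
inductive cs_ax :: "trm \<Rightarrow> trm \<Rightarrow> bool" where
  "cs_ax (Sub (Sub t (lift 0 1 s)) v) (Sub (Sub (swap 0 t) (lift 0 1 v)) s)"

inductive o_ax :: "trm \<Rightarrow> trm \<Rightarrow> bool" where
  cs: "cs_ax t u \<Longrightarrow> o_ax t u"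
| lam: "o_ax (Lam (Sub t (lift 0 1 s))) (Sub (Lam (swap 0 t)) s)"
| app: "o_ax (App (Sub t s) v) (Sub (App t (lift 0 1 v)) s)"

datatype eqn = CS | Oeq

fun eq_ax :: "eqn \<Rightarrow> trm \<Rightarrow> trm \<Rightarrow> bool" where
  "eq_ax CS = cs_ax"
| "eq_ax Oeq = o_ax"

definition eqv :: "eqn \<Rightarrow> trm \<Rightarrow> trm \<Rightarrow> bool" where
  "eqv E = equivclp (ctxt (eq_ax E))"

definition lj_mod :: "eqn \<Rightarrow> trm \<Rightarrow> trm \<Rightarrow> bool" where
  "lj_mod E t u \<longleftrightarrow> (\<exists>t' u'. eqv E t t' \<and> lj t' u' \<and> eqv E u' u)"

end

theory Submission
  imports Defs "HOL-Library.Confluence"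
begin

(* Let unf t be the pure term obtained from t by executing every jump t[x/u] as the
   meta-level substitution t{x/u}.  Three facts tie lambda-j to beta-reduction:
     (1) every term reduces to its unfolding: t ->*_lj unf t;
     (2) unfolding is invariant under the equations, and a lambda-j step projects to
         a (possibly empty) sequence of beta-steps; hence so does a step modulo E;
     (3) beta-steps are simulated by lambda-j: a redex (\x.t) u becomes t[x/u] by dB
         and the jump is then executed by the rules w, d and c.
   Given t0 =E t1 reducing to u0 and u1, the unfoldings of u0 and u1 are beta-reducts
   of unf t0 = unf t1, so by Church-Rosser for beta (Tait/Martin-Loef parallel
   reduction with Takahashi's complete development) they have a common beta-reduct w,
   and by (1) and (3) both u0 and u1 reduce to w in lambda-j. *)

section \<open>De Bruijn algebra\<close>

lemma lift_zero [simp]: "lift k 0 t = t"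
  by (induction t arbitrary: k) auto

lemma lift_lift: "i \<le> k \<Longrightarrow> lift i m (lift k n t) = lift (k + m) n (lift i m t)"
  by (induction t arbitrary: i k) auto

lemma lift_lift0 [simp]: "lift 0 (Suc 0) (lift k n s) = lift (Suc k) n (lift 0 (Suc 0) s)"
  using lift_lift[of 0 k 1 n s] by simp

lemma lift_lift_same: "lift k m (lift k n t) = lift k (m + n) t"
  by (induction t arbitrary: k) auto

lemma subst_lift [simp]: "subst k s (lift k (Suc 0) t) = t"
  by (induction t arbitrary: k s) auto

lemma lift_subst_above:
  "j \<le> k \<Longrightarrow> lift k n (subst j s t) = subst j (lift k n s) (lift (Suc k) n t)"
  by (induction t arbitrary: j k s) auto

lemma lift_subst_below:
  "k \<le> j \<Longrightarrow> lift k n (subst j s t) = subst (j + n) (lift k n s) (lift k n t)"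
  by (induction t arbitrary: j k s) auto

lemma lift0_subst [simp]:
  "lift 0 (Suc 0) (subst j s t) = subst (Suc j) (lift 0 (Suc 0) s) (lift 0 (Suc 0) t)"
  using lift_subst_below[of 0 j 1 s t] by simp

lemma subst_subst:
  "i \<le> j \<Longrightarrow> subst j v (subst i u t) = subst i (subst j v u) (subst (Suc j) (lift i 1 v) t)"
  by (induction t arbitrary: i j u v) auto

lemma subst_adjacent_comm:
  "subst k A (subst (Suc k) (lift k 1 s) b) = subst k s (subst k (lift k 1 A) b)"
  by (induction b arbitrary: k A s) auto

text \<open>Identifying variable k+1 with k and then substituting U, or substituting U for
  both: this is the semantics of the contraction rule c.\<close>
lemma subst_contract:
  "subst k U (subst (Suc k) (Var k) T) = subst k U (subst k (lift k 1 U) T)"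
  by (induction T arbitrary: k U) auto

lemma swap_lift: "j \<le> k \<Longrightarrow> swap (Suc k) (lift j 1 s) = lift j 1 (swap k s)"
  by (induction s arbitrary: j k) auto

lemma swap_subst: "j \<le> k \<Longrightarrow> swap k (subst j s t) = subst j (swap k s) (swap (Suc k) t)"
  by (induction t arbitrary: j k s) (auto simp: swap_lift[of 0, simplified])

text \<open>Semantics of the equations: permuting two binders (CS) or moving a jump past a
  binder (o) is invisible after substitution.\<close>
lemma subst_swap:
  "subst k A (subst k (lift k 1 B) (swap k T)) = subst k B (subst k (lift k 1 A) T)"
  by (induction T arbitrary: k A B) auto

lemma subst_swap_lifted: "subst (Suc k) (lift k 1 A) (swap k T) = subst k (lift k 1 A) T"
  by (induction T arbitrary: k A) auto

lemma occ_lift: "k \<le> j \<Longrightarrow> j < k + n \<Longrightarrow> occ j (lift k n U) = 0"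
  by (induction U arbitrary: j k) auto

lemma occ_lift1 [simp]: "occ k (lift k (Suc 0) U) = 0"
  by (rule occ_lift) auto

lemma occ_subst_lift: "occ k (subst k (lift k (Suc 0) U) t) = occ (Suc k) t"
  by (induction t arbitrary: k U) auto

lemma lift_subst_unused: "occ k T = 0 \<Longrightarrow> lift k (Suc 0) (subst k U T) = T"
  by (induction T arbitrary: k U) auto

text \<open>Any n of the occurrences of variable k in T can be renamed to a fresh variable
  (index k+1): this is the choice of T_[y]_x in rule c.\<close>
lemma occ_split:
  "n \<le> occ k T \<Longrightarrow>
     \<exists>T'. subst (Suc k) (Var k) T' = T \<and> occ (Suc k) T' = n \<and> occ k T' = occ k T - n"
proof (induction T arbitrary: k n)
  case (Var i)
  show ?case
  proof (cases "i = k \<and> n > 0")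
    case True
    then show ?thesis using Var by (intro exI[of _ "Var (Suc k)"]) auto
  next
    case False
    then show ?thesis using Var by (intro exI[of _ "lift (Suc k) 1 (Var i)"]) auto
  qed
next
  case (Lam T)
  then obtain T' where "subst (Suc (Suc k)) (Var (Suc k)) T' = T"
      "occ (Suc (Suc k)) T' = n" "occ (Suc k) T' = occ (Suc k) T - n"
    by fastforce
  then show ?case by (intro exI[of _ "Lam T'"]) auto
next
  case (App T1 T2)
  define n1 where "n1 = min n (occ k T1)"
  have "n1 \<le> occ k T1" "n - n1 \<le> occ k T2" using App.prems by (auto simp: n1_def)
  then obtain A B where
    "subst (Suc k) (Var k) A = T1" "occ (Suc k) A = n1" "occ k A = occ k T1 - n1"
    "subst (Suc k) (Var k) B = T2" "occ (Suc k) B = n - n1" "occ k B = occ k T2 - (n - n1)"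
    using App.IH by meson
  then show ?case using App.prems by (intro exI[of _ "App A B"]) (auto simp: n1_def)
next
  case (Sub T1 T2)
  define n1 where "n1 = min n (occ (Suc k) T1)"
  have "n1 \<le> occ (Suc k) T1" "n - n1 \<le> occ k T2" using Sub.prems by (auto simp: n1_def)
  then obtain A B where
    "subst (Suc (Suc k)) (Var (Suc k)) A = T1" "occ (Suc (Suc k)) A = n1"
    "occ (Suc k) A = occ (Suc k) T1 - n1"
    "subst (Suc k) (Var k) B = T2" "occ (Suc k) B = n - n1" "occ k B = occ k T2 - (n - n1)"
    using Sub.IH by meson
  then show ?case using Sub.prems by (intro exI[of _ "Sub A B"]) (auto simp: n1_def)
qed

lemma rtranclp_map:
  assumes "\<And>a b. r a b \<Longrightarrow> s\<^sup>*\<^sup>* (f a) (f b)" and "r\<^sup>*\<^sup>* a b"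
  shows "s\<^sup>*\<^sup>* (f a) (f b)"
  using assms(2) by (induction rule: rtranclp_induct) (auto intro: assms(1) rtranclp_trans)

lemma equivclp_invariant:
  assumes "\<And>a b. r a b \<Longrightarrow> f a = f b" and "equivclp r a b"
  shows "f a = f b"
  using assms(2) by (induction rule: equivclp_induct) (auto dest: assms(1))

lemma ctxt_star_congs:
  assumes "(ctxt R)\<^sup>*\<^sup>* t t'"
  shows "(ctxt R)\<^sup>*\<^sup>* (Lam t) (Lam t')"
    and "(ctxt R)\<^sup>*\<^sup>* (App t v) (App t' v)" and "(ctxt R)\<^sup>*\<^sup>* (App v t) (App v t')"
    and "(ctxt R)\<^sup>*\<^sup>* (Sub t v) (Sub t' v)" and "(ctxt R)\<^sup>*\<^sup>* (Sub v t) (Sub v t')"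
  by (rule rtranclp_map[OF _ assms]; blast intro: ctxt.intros)+

lemma ctxt_star_app:
  "(ctxt R)\<^sup>*\<^sup>* t t' \<Longrightarrow> (ctxt R)\<^sup>*\<^sup>* u u' \<Longrightarrow> (ctxt R)\<^sup>*\<^sup>* (App t u) (App t' u')"
  by (meson ctxt_star_congs rtranclp_trans)

lemma ctxt_star_sub:
  "(ctxt R)\<^sup>*\<^sup>* t t' \<Longrightarrow> (ctxt R)\<^sup>*\<^sup>* u u' \<Longrightarrow> (ctxt R)\<^sup>*\<^sup>* (Sub t u) (Sub t' u')"
  by (meson ctxt_star_congs rtranclp_trans)

section \<open>Executing a jump in lambda-j\<close>

lemma lj_root_step: "lj_root a b \<Longrightarrow> lj\<^sup>*\<^sup>* a b"
  unfolding lj_def by (auto intro: ctxt.base)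

text \<open>t[x/u] ->* t{x/u}, by induction on |t|_x: w and d handle 0 and 1 occurrences;
  with more, c splits off one occurrence and both resulting jumps have fewer.\<close>
lemma lj_execute_jump: "lj\<^sup>*\<^sup>* (Sub T U) (subst 0 U T)"
proof (induction "occ 0 T" arbitrary: T U rule: less_induct)
  case less
  consider "occ 0 T = 0" | "occ 0 T = 1" | "occ 0 T \<ge> 2" by linarith
  then show ?case
  proof cases
    case 1
    have "lj_root (Sub (lift 0 1 (subst 0 U T)) U) (subst 0 U T)" by (rule lj_root.w)
    then show ?thesis using lift_subst_unused[OF 1, of U] by (auto intro: lj_root_step)
  next
    case 2
    then show ?thesis by (intro lj_root_step lj_root.d) simp
  next
    case 3
    then obtain T' where T': "subst 1 (Var 0) T' = T" "occ 1 T' = 1" "occ 0 T' = occ 0 T - 1"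
      using occ_split[of 1 0 T] by auto
    have "lj\<^sup>*\<^sup>* (Sub T U) (Sub (Sub T' (lift 0 1 U)) U)"
      using T' 3 by (intro lj_root_step lj_root.c) auto
    also have "lj\<^sup>*\<^sup>* \<dots> (Sub (subst 0 (lift 0 1 U) T') U)"
      unfolding lj_def using less 3 T' by (intro ctxt_star_congs) (simp add: lj_def)
    also have "lj\<^sup>*\<^sup>* \<dots> (subst 0 U (subst 0 (lift 0 1 U) T'))"
      using less 3 T' occ_subst_lift[of 0 U T'] by simp
    also have "subst 0 U (subst 0 (lift 0 1 U) T') = subst 0 U T"
      using subst_contract[of 0 U T'] T' by simp
    finally show ?thesis .
  qed
qed

section \<open>Church-Rosser for beta\<close>

text \<open>Beta-reduction on the full syntax (jumps are inert constructors).\<close>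
inductive beta_root :: "trm \<Rightarrow> trm \<Rightarrow> bool" where
  "beta_root (App (Lam t) u) (subst 0 u t)"

abbreviation beta :: "trm \<Rightarrow> trm \<Rightarrow> bool" where
  "beta \<equiv> ctxt beta_root"

inductive par :: "trm \<Rightarrow> trm \<Rightarrow> bool" where
  pvar: "par (Var i) (Var i)"
| plam: "par t t' \<Longrightarrow> par (Lam t) (Lam t')"
| papp: "par t t' \<Longrightarrow> par u u' \<Longrightarrow> par (App t u) (App t' u')"
| psub: "par t t' \<Longrightarrow> par u u' \<Longrightarrow> par (Sub t u) (Sub t' u')"
| pbeta: "par t t' \<Longrightarrow> par u u' \<Longrightarrow> par (App (Lam t) u) (subst 0 u' t')"

lemma par_refl [simp]: "par t t"
  by (induction t) (auto intro: par.intros)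

lemma par_lift: "par t t' \<Longrightarrow> par (lift k n t) (lift k n t')"
proof (induction arbitrary: k rule: par.induct)
  case (pbeta t t' u u')
  then show ?case using lift_subst_above[of 0 k n u' t'] by (auto intro: par.intros)
qed (auto intro: par.intros)

lemma par_subst: "par t t' \<Longrightarrow> par u u' \<Longrightarrow> par (subst k u t) (subst k u' t')"
proof (induction arbitrary: k u u' rule: par.induct)
  case (pbeta t t' s s')
  have "par (App (Lam (subst (Suc k) (lift 0 1 u) t)) (subst k u s))
            (subst 0 (subst k u' s') (subst (Suc k) (lift 0 1 u') t'))"
    using pbeta by (intro par.pbeta) (auto intro: par_lift)
  then show ?case using subst_subst[of 0 k u' s' t'] by simp
next
  case (plam t t')
  then show ?case using par_lift[of u u' 0 1] by (auto intro: par.intros)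
next
  case (psub t t' v v')
  then show ?case using par_lift[of u u' 0 1] by (auto intro: par.intros)
qed (auto intro!: par.intros)

lemma beta_par: "beta t u \<Longrightarrow> par t u"
  by (induction rule: ctxt.induct) (auto elim!: beta_root.cases intro: par.intros)

lemma par_betas: "par t u \<Longrightarrow> beta\<^sup>*\<^sup>* t u"
proof (induction rule: par.induct)
  case (pbeta t t' u u')
  then have "beta\<^sup>*\<^sup>* (App (Lam t) u) (App (Lam t') u')"
    by (intro ctxt_star_app ctxt_star_congs)
  moreover have "beta (App (Lam t') u') (subst 0 u' t')" by (intro ctxt.base beta_root.intros)
  ultimately show ?case by auto
qed (auto intro: ctxt_star_app ctxt_star_congs ctxt_star_sub)

lemma pars_eq_betas: "par\<^sup>*\<^sup>* = beta\<^sup>*\<^sup>*"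
  by (rule rtranclp_subset) (auto intro: beta_par par_betas)

lemma betas_subst:
  assumes "beta\<^sup>*\<^sup>* t t'" and "beta\<^sup>*\<^sup>* u u'"
  shows "beta\<^sup>*\<^sup>* (subst k u t) (subst k u' t')"
proof -
  have "beta\<^sup>*\<^sup>* (subst k u t) (subst k u t')"
    by (rule rtranclp_map[where f = "\<lambda>x. subst k u x", OF _ assms(1)])
       (blast intro: par_betas par_subst beta_par par_refl)
  also have "beta\<^sup>*\<^sup>* \<dots> (subst k u' t')"
    by (rule rtranclp_map[where f = "\<lambda>x. subst k x t'", OF _ assms(2)])
       (blast intro: par_betas par_subst beta_par par_refl)
  finally show ?thesis .
qed

fun cd :: "trm \<Rightarrow> trm" where
  "cd (Var i) = Var i"
| "cd (Lam t) = Lam (cd t)"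
| "cd (App (Lam t) u) = subst 0 (cd u) (cd t)"
| "cd (App t u) = App (cd t) (cd u)"
| "cd (Sub t u) = Sub (cd t) (cd u)"

lemma par_cd: "par t s \<Longrightarrow> par s (cd t)"
proof (induction rule: par.induct)
  case (papp t t' u u')
  show ?case
  proof (cases t)
    case (Lam b)
    with papp obtain b' where "t' = Lam b'" "par b' (cd b)" by (auto elim: par.cases)
    then show ?thesis using Lam papp by (auto intro: par.intros)
  qed (use papp in \<open>auto intro: par.intros\<close>)
qed (auto intro: par.intros par_subst)

lemma confluent_beta: "confluentp beta"
proof -
  have "strong_confluentp par"
  proof (rule strong_confluentpI)
    fix x y z
    assume "par x y" "par x z"
    then have "par\<^sup>*\<^sup>* y (cd x)" "par\<^sup>=\<^sup>= z (cd x)" by (auto intro: par_cd)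
    then show "\<exists>u. par\<^sup>*\<^sup>* y u \<and> par\<^sup>=\<^sup>= z u" by blast
  qed
  then have "confluentp par" by (rule strong_confluentp_imp_confluentp)
  then show ?thesis
    by (intro confluentpI) (use confluentpD[of par, unfolded pars_eq_betas] in blast)
qed

section \<open>Unfolding jumps\<close>

fun unf :: "trm \<Rightarrow> trm" where
  "unf (Var i) = Var i"
| "unf (Lam t) = Lam (unf t)"
| "unf (App t u) = App (unf t) (unf u)"
| "unf (Sub t u) = subst 0 (unf u) (unf t)"

lemma unf_lift [simp]: "unf (lift k n t) = lift k n (unf t)"
  by (induction t arbitrary: k) (auto simp: lift_subst_above)

lemma unf_swap [simp]: "unf (swap k t) = swap k (unf t)"
  by (induction t arbitrary: k) (auto simp: swap_subst)

lemma unf_subst: "unf (subst k u t) = subst k (unf u) (unf t)"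
  by (induction t arbitrary: k u) (auto simp: subst_subst[of 0])

lemma lj_to_unf: "lj\<^sup>*\<^sup>* t (unf t)"
proof (induction t)
  case (Sub t u)
  then have "lj\<^sup>*\<^sup>* (Sub t u) (Sub (unf t) (unf u))" unfolding lj_def by (intro ctxt_star_sub)
  then show ?case using lj_execute_jump by (auto intro: rtranclp_trans)
qed (auto simp: lj_def intro: ctxt_star_congs ctxt_star_app)

text \<open>Fact (3): beta-steps are simulated by dB followed by executing the created jump.\<close>
lemma beta_lj: "beta t u \<Longrightarrow> lj\<^sup>*\<^sup>* t u"
proof (induction rule: ctxt.induct)
  case (base t u)
  then obtain b a where e: "t = App (Lam b) a" "u = subst 0 a b" by (auto elim: beta_root.cases)
  have "lj_root (App (jumps (Lam b) []) a) (jumps (Sub b (lift 0 (length ([]::trm list)) a)) [])"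
    by (rule lj_root.dB)
  then have "lj\<^sup>*\<^sup>* t (Sub b a)" using e by (auto intro: lj_root_step)
  then show ?case using e lj_execute_jump by (auto intro: rtranclp_trans)
qed (auto simp: lj_def intro: ctxt_star_congs)

lemma betas_lj: "beta\<^sup>*\<^sup>* t u \<Longrightarrow> lj\<^sup>*\<^sup>* t u"
  by (rule rtranclp_map[where f = id, simplified]) (rule beta_lj)

text \<open>Iterated substitution, the unfolding of a list of jumps.\<close>
fun substs :: "nat \<Rightarrow> trm list \<Rightarrow> trm \<Rightarrow> trm" where
  "substs k [] x = x"
| "substs k (s # ss) x = substs k ss (subst k s x)"

lemma unf_jumps: "unf (jumps X us) = substs 0 (map unf us) (unf X)"
  by (induction us arbitrary: X) auto

lemma substs_lam: "substs k ss (Lam b) = Lam (substs (Suc k) (map (lift 0 1) ss) b)"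
  by (induction ss arbitrary: b) auto

text \<open>The distance rule dB is sound for unfolding: substituting the argument under the
  unfolded list of jumps equals substituting it (suitably lifted) before them.\<close>
lemma subst_substs:
  "subst 0 a (substs 1 (map (lift 0 1) ss) b) = substs 0 ss (subst 0 (lift 0 (length ss) a) b)"
proof (induction ss arbitrary: b)
  case (Cons s ss)
  have "subst 0 (lift 0 (length ss) a) (subst 1 (lift 0 1 s) b)
      = subst 0 s (subst 0 (lift 0 (length (s # ss)) a) b)"
    using subst_adjacent_comm[of 0 "lift 0 (length ss) a" s b] lift_lift_same[of 0 1 "length ss" a]
    by (simp del: lift_lift0)
  then show ?case using Cons by simp
qed simp

lemma lj_root_unf: "lj_root a b \<Longrightarrow> beta\<^sup>*\<^sup>* (unf a) (unf b)"
proof (induction rule: lj_root.induct)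
  case (dB t us u)
  let ?ss = "map unf us"
  have "unf (App (jumps (Lam t) us) u) = App (Lam (substs 1 (map (lift 0 1) ?ss) (unf t))) (unf u)"
    by (simp add: unf_jumps substs_lam)
  moreover have "unf (jumps (Sub t (lift 0 (length us) u)) us)
      = subst 0 (unf u) (substs 1 (map (lift 0 1) ?ss) (unf t))"
    using subst_substs[of "unf u" ?ss "unf t"] by (simp add: unf_jumps del: lift_lift0 One_nat_def)
  ultimately show ?case by (auto intro: ctxt.base beta_root.intros)
next
  case (c t t' u)
  have "unf t = subst 1 (Var 0) (unf t')" using c unf_subst[of 1 "Var 0" t'] by simp
  then show ?case using subst_contract[of 0 "unf u" "unf t'"] by simp
qed (auto simp: unf_subst)

lemma lj_unf: "lj a b \<Longrightarrow> beta\<^sup>*\<^sup>* (unf a) (unf b)"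
  unfolding lj_def
  by (induction rule: ctxt.induct) (auto intro: lj_root_unf ctxt_star_congs betas_subst)

lemma o_ax_unf: "o_ax a b \<Longrightarrow> unf a = unf b"
  by (auto elim!: o_ax.cases cs_ax.cases
      simp: subst_swap[of 0, simplified] subst_swap_lifted[of 0, simplified] simp del: lift_lift0)

lemma eq_ax_o_ax: "eq_ax E a b \<Longrightarrow> o_ax a b"
  by (cases E) (auto intro: o_ax.cs)

lemma eqv_unf: "eqv E a b \<Longrightarrow> unf a = unf b"
proof -
  have "ctxt (eq_ax E) a b \<Longrightarrow> unf a = unf b" for a b
    by (induction rule: ctxt.induct) (auto dest: eq_ax_o_ax o_ax_unf)
  then show "eqv E a b \<Longrightarrow> unf a = unf b"
    unfolding eqv_def by (rule equivclp_invariant)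
qed

lemma lj_mod_unf: "lj_mod E a b \<Longrightarrow> beta\<^sup>*\<^sup>* (unf a) (unf b)"
  unfolding lj_mod_def by (metis eqv_unf lj_unf)

lemma lj_mods_unf: "(lj_mod E)\<^sup>*\<^sup>* a b \<Longrightarrow> beta\<^sup>*\<^sup>* (unf a) (unf b)"
  by (rule rtranclp_map[OF lj_mod_unf])

lemma ljs_lj_mods: "lj\<^sup>*\<^sup>* a b \<Longrightarrow> (lj_mod E)\<^sup>*\<^sup>* a b"
proof (rule rtranclp_map[where f = id, simplified])
  show "(lj_mod E)\<^sup>*\<^sup>* c d" if "lj c d" for c d
    using that unfolding lj_mod_def eqv_def by (blast intro: equivclp_refl)
qed

theorem theorem25:
  fixes E :: eqn and t0 t1 u0 u1 :: trm
  assumes "eqv E t0 t1"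
    and "(lj_mod E)\<^sup>*\<^sup>* t0 u0"
    and "(lj_mod E)\<^sup>*\<^sup>* t1 u1"
  shows "\<exists>v0 v1. (lj_mod E)\<^sup>*\<^sup>* u0 v0 \<and> (lj_mod E)\<^sup>*\<^sup>* u1 v1 \<and> eqv E v0 v1"
proof -
  have "beta\<^sup>*\<^sup>* (unf t0) (unf u0)" by (rule lj_mods_unf[OF assms(2)])
  moreover have "beta\<^sup>*\<^sup>* (unf t0) (unf u1)"
    using lj_mods_unf[OF assms(3)] eqv_unf[OF assms(1)] by simp
  ultimately obtain w where w: "beta\<^sup>*\<^sup>* (unf u0) w" "beta\<^sup>*\<^sup>* (unf u1) w"
    using confluentpD[OF confluent_beta] by blast
  have "lj\<^sup>*\<^sup>* u0 w" using lj_to_unf[of u0] betas_lj[OF w(1)] by (rule rtranclp_trans)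
  moreover have "lj\<^sup>*\<^sup>* u1 w" using lj_to_unf[of u1] betas_lj[OF w(2)] by (rule rtranclp_trans)
  ultimately show ?thesis unfolding eqv_def by (blast intro: ljs_lj_mods equivclp_refl)
qed

end
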